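(* Let $\mathcal{X}\subseteq\mathbb{R}^n$ be a nonempty closed convex set with Euclidean projection $\Pi_{\mathcal{X}}$, let $\Theta\subseteq\mathbb{R}^m$, and let $f:\mathbb{R}^n\times\mathbb{R}^m\to\mathbb{R}$ be differentiable and convex in its first argument. Assume: (A1) there is $G>0$ with $|f(x,\theta)-f(y,\theta)|\le G\|x-y\|$ for all $x,y\in\mathcal{X}$, $\theta\in\Theta$; (A2) there is $L>0$ with $f(y,\theta)\le f(x,\theta)+\nabla_x f(x,\theta)^T(y-x)+\frac{L}{2}\|y-x\|^2$ for all $x,y\in\mathcal{X}$, $\theta\in\Theta$; (A3) there is $\lambda>0$ with $f(y,\theta)\ge f(x,\theta)+\nabla_x f(x,\theta)^T(y-x)+\frac{\lambda}{2}\|y-x\|^2$ for all $x,y\in\mathcal{X}$, $\theta\in\Theta$; (A4) there is $C_\theta>0$ with $\|\nabla_x f(x,\theta_1)-\nabla_x f(x,\theta_2)\|\le C_\theta\|\theta_1-\theta_2\|$ for all $x\in\mathcal{X}$, $\theta_1,\theta_2\in\Theta$. Let $\theta_1,\dots,\theta_T\in\Theta$ and, for $t=2,\dots,T$, let $\hat\theta_t\in\Theta$ be a prediction of $\theta_t$ made from $\theta_1,\dots,\theta_{t-1}$. Fix an integer $k\ge1$, $\eta>0$, $x_1\in\mathcal{X}$, and for $t=1,\dots,T-1$ define $x_{t+1}$ by performing $k$ predicted projected gradient steps: $z^0=x_t$, $z^{j}=\Pi_{\mathcal{X}}\big(z^{j-1}-\eta\nabla_x f(z^{j-1},\hat\theta_{t+1})\big)$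 for $j=1,\dots,k$, and $x_{t+1}=z^k$. If $\eta\le 1/L$, then with $C_{\eta,\lambda}=\sqrt{1-\frac{2\lambda\eta}{1+\eta\lambda}}$, $$\mathbf{Reg}_D(\{x_t\})\le \frac{G\|x_1-x_1^\ast\|}{1-C_{\eta,\lambda}^k}+\frac{G\,C_{\eta,\lambda}^k}{1-C_{\eta,\lambda}^k}\mathcal{P}^\ast+\frac{G\eta C_\theta}{1-C_{\eta,\lambda}}P^\theta .$$
   Context: Write $x_t^\ast=\arg\min_{x\in\mathcal{X}}f(x,\theta_t)$. The dynamic regret is $\mathbf{Reg}_D(\{x_t\})=\sum_{t=1}^T\big(f(x_t,\theta_t)-\min_{x\in\mathcal{X}}f(x,\theta_t)\big)$. The path length is $\mathcal{P}^\ast=\sum_{t=1}^{T-1}\|x_t^\ast-x_{t+1}^\ast\|$, and the parameter prediction regularity is $P^\theta=\sum_{t=2}^T\|\theta_t-\hat\theta_t\|$. All norms are Euclidean. *)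

theory Defs
  imports "HOL-Analysis.Analysis"
begin

definition grad_x :: "('a::euclidean_space \<Rightarrow> 'b \<Rightarrow> real) \<Rightarrow> 'a \<Rightarrow> 'b \<Rightarrow> 'a" where
  "grad_x f x \<theta> = (SOME D. GDERIV (\<lambda>y. f y \<theta>) x :> D)"

definition pgd_step :: "'a::euclidean_space set \<Rightarrow> ('a \<Rightarrow> 'b \<Rightarrow> real) \<Rightarrow> real \<Rightarrow> 'b \<Rightarrow> 'a \<Rightarrow> 'a" where
  "pgd_step X f \<eta> \<theta> z = closest_point X (z - \<eta> *\<^sub>R grad_x f z \<theta>)"

definition xstar :: "'a set \<Rightarrow> ('a \<Rightarrow> 'b \<Rightarrow> real) \<Rightarrow> 'b \<Rightarrow> 'a" where
  "xstar X f \<theta> = arg_min_on (\<lambda>x. f x \<theta>) X"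

definition dyn_regret :: "'a set \<Rightarrow> ('a \<Rightarrow> 'b \<Rightarrow> real) \<Rightarrow> (nat \<Rightarrow> 'a) \<Rightarrow> (nat \<Rightarrow> 'b) \<Rightarrow> nat \<Rightarrow> real" where
  "dyn_regret X f x \<theta> T = (\<Sum>t=1..T. f (x t) (\<theta> t) - (INF y\<in>X. f y (\<theta> t)))"

definition path_length :: "'a::real_normed_vector set \<Rightarrow> ('a \<Rightarrow> 'b \<Rightarrow> real) \<Rightarrow> (nat \<Rightarrow> 'b) \<Rightarrow> nat \<Rightarrow> real" where
  "path_length X f \<theta> T = (\<Sum>t=1..T-1. norm (xstar X f (\<theta> t) - xstar X f (\<theta> (t+1))))"

definition pred_regularity :: "(nat \<Rightarrow> 'b::real_normed_vector) \<Rightarrow> (nat \<Rightarrow> 'b) \<Rightarrow> nat \<Rightarrow> real" where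
  "pred_regularity \<theta> \<theta>h T = (\<Sum>t=2..T. norm (\<theta> t - \<theta>h t))"

end

theory Submission
  imports Defs
begin

text \<open>
  One projected gradient step with step size \<open>\<eta> \<le> 1/L\<close> contracts the distance to the
  minimiser \<open>w\<close> of \<open>f(\<cdot>, \<theta>)\<close> by \<open>C = sqrt ((1 - \<eta>\<lambda>) / (1 + \<eta>\<lambda>))\<close>; this combines
  smoothness, strong convexity at the current point and at \<open>w\<close>, and the obtuse-angle property
  of the projection. Using the prediction \<open>\<theta>h\<close> instead of \<open>\<theta>\<close> moves each step by at most
  \<open>\<eta> C\<^sub>\<theta> \<parallel>\<theta> - \<theta>h\<parallel>\<close>, so after \<open>k\<close> steps the tracking error \<open>d\<^sub>t = \<parallel>x\<^sub>t - x\<^sup>*\<^sub>t\<parallel>\<close> satisfies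
  \<open>d\<^sub>t\<^sub>+\<^sub>1 \<le> C\<^sup>k (d\<^sub>t + \<parallel>x\<^sup>*\<^sub>t - x\<^sup>*\<^sub>t\<^sub>+\<^sub>1\<parallel>) + \<eta> C\<^sub>\<theta> (1 - C\<^sup>k) / (1 - C) \<parallel>\<theta>\<^sub>t\<^sub>+\<^sub>1 - \<theta>h\<^sub>t\<^sub>+\<^sub>1\<parallel>\<close>.
  Summing this recursion bounds \<open>\<Sum> d\<^sub>t\<close>, and the Lipschitz bound (A1) turns that into the
  regret bound.
\<close>

lemma xstar_minimizes:
  assumes "\<exists>w\<in>X. \<forall>y\<in>X. f w \<phi> \<le> f y \<phi>"
  shows "xstar X f \<phi> \<in> X" and "y \<in> X \<Longrightarrow> f (xstar X f \<phi>) \<phi> \<le> f y \<phi>"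
proof -
  have "\<exists>w. is_arg_min (\<lambda>x. f x \<phi>) (\<lambda>x. x \<in> X) w"
    using assms unfolding is_arg_min_def by (meson not_le)
  then have "is_arg_min (\<lambda>x. f x \<phi>) (\<lambda>x. x \<in> X) (xstar X f \<phi>)"
    unfolding xstar_def arg_min_on_def arg_min_def by (rule someI_ex)
  then show "xstar X f \<phi> \<in> X" and "y \<in> X \<Longrightarrow> f (xstar X f \<phi>) \<phi> \<le> f y \<phi>"
    unfolding is_arg_min_def by (auto simp: not_less)
qed

lemma continuous_attains_inf_quadratic_growth:
  fixes X :: "'a::euclidean_space set" and h :: "'a \<Rightarrow> real"
  assumes "closed X" "x0 \<in> X" "continuous_on X h" "lam > 0"
    and growth: "\<And>y. y \<in> X \<Longrightarrow> h y \<ge> h x0 + inner g (y - x0) + lam / 2 * (norm (y - x0))\<^sup>2"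
  shows "\<exists>w\<in>X. \<forall>y\<in>X. h w \<le> h y"
proof -
  define K where "K = X \<inter> cball x0 (2 * norm g / lam)"
  have "x0 \<in> K"
    unfolding K_def using assms by auto
  moreover have "compact K" and "continuous_on K h"
    unfolding K_def using assms(1,3) by (auto simp: closed_Int_compact intro: continuous_on_subset)
  ultimately obtain m where m: "m \<in> K" "\<And>y. y \<in> K \<Longrightarrow> h m \<le> h y"
    using continuous_attains_inf[of K h] by blast
  have "h m \<le> h y" if "y \<in> X" for y
  proof (cases "y \<in> K")
    case False
    define r where "r = norm (y - x0)"
    have "lam * r \<ge> 2 * norm g"
      using False that \<open>lam > 0\<close> unfolding K_def r_def by (auto simp: dist_norm norm_minus_commute field_simps)
    then have "lam / 2 * r\<^sup>2 \<ge> norm g * r"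
      unfolding power2_eq_square using mult_right_mono[of _ _ r] by (fastforce simp: r_def)
    moreover have "inner g (y - x0) \<ge> - (norm g * r)"
      unfolding r_def using norm_cauchy_schwarz[of "-g" "y - x0"] by simp
    ultimately have "h y \<ge> h x0"
      using growth[OF that] unfolding r_def by linarith
    then show ?thesis
      using m \<open>x0 \<in> K\<close> by fastforce
  qed (use m in auto)
  then show ?thesis
    using m K_def by auto
qed

lemma minimizer_variational_inequality:
  fixes X :: "'a::real_inner set" and h :: "'a \<Rightarrow> real"
  assumes "convex X" "w \<in> X" "v \<in> X" "L > 0"
    and min: "\<And>y. y \<in> X \<Longrightarrow> h w \<le> h y"
    and smooth: "\<And>y. y \<in> X \<Longrightarrow> h y \<le> h w + inner g (y - w) + L / 2 * (norm (y - w))\<^sup>2"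
  shows "inner g (v - w) \<ge> 0"
proof (rule ccontr)
  define c where "c = - inner g (v - w)"
  define D where "D = (norm (v - w))\<^sup>2"
  assume "\<not> ?thesis"
  then have "c > 0" and "D > 0"
    unfolding c_def D_def by auto
  define t where "t = min 1 (c / (L * D))"
  have "0 < t" "t \<le> 1" and "L * D * t \<le> c"
    using \<open>c > 0\<close> \<open>D > 0\<close> \<open>L > 0\<close> unfolding t_def by (auto simp: field_simps min_def)
  define p where "p = w + t *\<^sub>R (v - w)"
  have "p = (1 - t) *\<^sub>R w + t *\<^sub>R v"
    unfolding p_def by (simp add: algebra_simps)
  then have "p \<in> X"
    using assms(1-3) \<open>0 < t\<close> \<open>t \<le> 1\<close> by (simp add: convexD)
  have "h w \<le> h w + inner g (p - w) + L / 2 * (norm (p - w))\<^sup>2"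
    using min[OF \<open>p \<in> X\<close>] smooth[OF \<open>p \<in> X\<close>] by linarith
  also have "p - w = t *\<^sub>R (v - w)"
    unfolding p_def by simp
  also have "h w + inner g (t *\<^sub>R (v - w)) + L / 2 * (norm (t *\<^sub>R (v - w)))\<^sup>2
      = h w + t * (L / 2 * t * D - c)"
    unfolding c_def D_def norm_scaleR inner_scaleR_right using \<open>0 < t\<close> by (simp add: power2_eq_square algebra_simps)
  finally have "c \<le> L / 2 * t * D"
    using \<open>0 < t\<close> by (simp add: zero_le_mult_iff)
  then show False
    using \<open>L * D * t \<le> c\<close> \<open>c > 0\<close> by (simp add: algebra_simps)
qed

lemma projected_gradient_step_contraction_sq:
  fixes z u w g :: "'a::real_inner"
  assumes smooth: "hu \<le> hz + inner g (u - z) + L / 2 * (norm (u - z))\<^sup>2"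
    and min_growth: "hu \<ge> hw + lam / 2 * (norm (u - w))\<^sup>2"
    and strongly_convex: "hw \<ge> hz + inner g (w - z) + lam / 2 * (norm (w - z))\<^sup>2"
    and projection: "inner (z - \<eta> *\<^sub>R g - u) (w - u) \<le> 0"
    and "\<eta> > 0" "\<eta> * L \<le> 1"
  shows "(1 + \<eta> * lam) * (norm (u - w))\<^sup>2 \<le> (1 - \<eta> * lam) * (norm (z - w))\<^sup>2"
proof -
  define a where "a = u - w"
  define b where "b = z - u"
  have zw: "(norm (z - w))\<^sup>2 = (norm a)\<^sup>2 + 2 * inner a b + (norm b)\<^sup>2"
    unfolding a_def b_def by (simp add: power2_norm_eq_inner algebra_simps inner_commute)
  have "lam / 2 * (norm a)\<^sup>2 \<le> inner g a - lam / 2 * (norm (z - w))\<^sup>2 + L / 2 * (norm b)\<^sup>2"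
    using smooth min_growth strongly_convex unfolding a_def b_def
    by (simp add: norm_minus_commute inner_diff_right)
  moreover have "\<eta> * L / 2 * (norm b)\<^sup>2 \<le> (norm b)\<^sup>2 / 2"
    using mult_right_mono[OF \<open>\<eta> * L \<le> 1\<close>, of "(norm b)\<^sup>2"] by simp
  ultimately have "\<eta> * lam * (norm a)\<^sup>2 \<le> 2 * \<eta> * inner g a - \<eta> * lam * (norm (z - w))\<^sup>2 + (norm b)\<^sup>2"
    using mult_left_mono[of _ _ \<eta>] \<open>\<eta> > 0\<close> by (fastforce simp: algebra_simps)
  moreover have "\<eta> * inner g a \<le> inner a b"
    using projection unfolding a_def b_def by (simp add: inner_diff inner_commute algebra_simps)
  ultimately show ?thesis
    using zw unfolding a_def[symmetric] by (simp add: algebra_simps)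
qed

lemma pgd_step_in:
  assumes "closed X" "X \<noteq> {}"
  shows "pgd_step X f \<eta> \<phi> z \<in> X"
  unfolding pgd_step_def using closest_point_in_set[OF assms] .

lemma funpow_pgd_step_in:
  assumes "closed X" "X \<noteq> {}" "z \<in> X"
  shows "(pgd_step X f \<eta> \<phi> ^^ j) z \<in> X"
  using pgd_step_in[OF assms(1,2)] assms(3) by (cases j) auto

lemma norm_pgd_step_param_diff_le:
  assumes "convex X" "closed X" "X \<noteq> {}" "\<eta> \<ge> 0"
  shows "norm (pgd_step X f \<eta> \<phi> z - pgd_step X f \<eta> \<psi> z) \<le> \<eta> * norm (grad_x f z \<phi> - grad_x f z \<psi>)"
proof -
  have "norm (pgd_step X f \<eta> \<phi> z - pgd_step X f \<eta> \<psi> z)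
      \<le> norm ((z - \<eta> *\<^sub>R grad_x f z \<phi>) - (z - \<eta> *\<^sub>R grad_x f z \<psi>))"
    using closest_point_lipschitz[OF assms(1-3)] unfolding pgd_step_def dist_norm .
  also have "\<dots> = \<eta> * norm (grad_x f z \<phi> - grad_x f z \<psi>)"
    using assms(4) by (simp add: scaleR_diff_right[symmetric] norm_minus_commute)
  finally show ?thesis .
qed

lemma funpow_perturbed_contraction:
  fixes Q :: "'a::real_normed_vector \<Rightarrow> 'a"
  assumes maps: "\<And>y. y \<in> S \<Longrightarrow> Q y \<in> S" and "z \<in> S" "0 \<le> C"
    and contr: "\<And>y. y \<in> S \<Longrightarrow> norm (Q y - w) \<le> C * norm (y - w) + \<delta>"
  shows "norm ((Q ^^ j) z - w) \<le> C ^ j * norm (z - w) + \<delta> * (\<Sum>i<j. C ^ i)"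
proof (induction j)
  case (Suc j)
  have "(Q ^^ j) z \<in> S"
    using maps \<open>z \<in> S\<close> by (induction j) auto
  then have "norm ((Q ^^ Suc j) z - w) \<le> C * norm ((Q ^^ j) z - w) + \<delta>"
    using contr by simp
  also have "\<dots> \<le> C * (C ^ j * norm (z - w) + \<delta> * (\<Sum>i<j. C ^ i)) + \<delta>"
    using Suc.IH \<open>0 \<le> C\<close> by (simp add: mult_left_mono)
  also have "\<dots> = C ^ Suc j * norm (z - w) + \<delta> * (\<Sum>i<Suc j. C ^ i)"
    by (simp add: sum.lessThan_Suc_shift sum_distrib_left algebra_simps del: sum.lessThan_Suc)
  finally show ?case .
qed simp

lemma sum_le_of_perturbed_recursion:
  fixes d p q :: "nat \<Rightarrow> real"
  assumes "1 \<le> T" "0 \<le> \<rho>" "0 \<le> d T"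
    and rec: "\<And>t. 1 \<le> t \<Longrightarrow> t < T \<Longrightarrow> d (t + 1) \<le> \<rho> * (d t + p t) + q (t + 1)"
  shows "(1 - \<rho>) * (\<Sum>t=1..T. d t) \<le> d 1 + \<rho> * (\<Sum>t=1..T-1. p t) + (\<Sum>t=2..T. q t)"
proof -
  have shift: "(\<Sum>t=2..T. h t) = (\<Sum>t=1..T-1. h (t + 1))" for h :: "nat \<Rightarrow> real"
    using sum.shift_bounds_cl_nat_ivl[of h 1 1 "T - 1"] \<open>1 \<le> T\<close> by (simp add: numeral_2_eq_2)
  have "(\<Sum>t=1..T. d t) = d 1 + (\<Sum>t=2..T. d t)"
    using sum.atLeast_Suc_atMost[of 1 T d] \<open>1 \<le> T\<close> by (simp add: numeral_2_eq_2)
  also have "(\<Sum>t=2..T. d t) \<le> (\<Sum>t=1..T-1. \<rho> * (d t + p t) + q (t + 1))"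
    unfolding shift by (rule sum_mono) (use rec in auto)
  also have "\<dots> = \<rho> * (\<Sum>t=1..T-1. d t) + \<rho> * (\<Sum>t=1..T-1. p t) + (\<Sum>t=2..T. q t)"
    unfolding shift by (simp add: sum.distrib sum_distrib_left distrib_left)
  finally have "(\<Sum>t=1..T. d t) \<le> d 1 + \<rho> * (\<Sum>t=1..T-1. d t) + \<rho> * (\<Sum>t=1..T-1. p t) + (\<Sum>t=2..T. q t)"
    by simp
  moreover have "(\<Sum>t=1..T-1. d t) \<le> (\<Sum>t=1..T. d t)"
    using sum.cl_ivl_Suc[of d 1 "T - 1"] \<open>1 \<le> T\<close> \<open>0 \<le> d T\<close> by simp
  ultimately show ?thesis
    using mult_left_mono[OF _ \<open>0 \<le> \<rho>\<close>] by (fastforce simp: algebra_simps)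
qed

lemma dyn_regret_le_sum_dist:
  fixes x :: "nat \<Rightarrow> 'a::real_normed_vector"
  assumes in_X: "\<And>t. t \<in> {1..T} \<Longrightarrow> x t \<in> X \<and> xstar X f (\<theta> t) \<in> X"
    and min: "\<And>t y. t \<in> {1..T} \<Longrightarrow> y \<in> X \<Longrightarrow> f (xstar X f (\<theta> t)) (\<theta> t) \<le> f y (\<theta> t)"
    and lipschitz: "\<And>t y z. t \<in> {1..T} \<Longrightarrow> y \<in> X \<Longrightarrow> z \<in> X \<Longrightarrow>
          \<bar>f y (\<theta> t) - f z (\<theta> t)\<bar> \<le> G * norm (y - z)"
  shows "dyn_regret X f x \<theta> T \<le> G * (\<Sum>t=1..T. norm (x t - xstar X f (\<theta> t)))"
  unfolding dyn_regret_def sum_distrib_left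
proof (rule sum_mono)
  fix t assume t: "t \<in> {1..T}"
  have "(INF y\<in>X. f y (\<theta> t)) = f (xstar X f (\<theta> t)) (\<theta> t)"
    by (rule cInf_eq_minimum) (use in_X[OF t] min[OF t] in auto)
  then show "f (x t) (\<theta> t) - (INF y\<in>X. f y (\<theta> t)) \<le> G * norm (x t - xstar X f (\<theta> t))"
    using lipschitz[OF t] in_X[OF t] by fastforce
qed

definition pgd_rate :: "real \<Rightarrow> real \<Rightarrow> real" where
  "pgd_rate lam \<eta> = sqrt (1 - 2 * lam * \<eta> / (1 + \<eta> * lam))"

lemma pgd_rate_eq:
  assumes "0 < lam" "0 < \<eta>"
  shows "pgd_rate lam \<eta> = sqrt ((1 - \<eta> * lam) / (1 + \<eta> * lam))"
proof -
  have "1 + \<eta> * lam > 0"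
    using assms by (simp add: add_pos_pos)
  then show ?thesis
    unfolding pgd_rate_def by (simp add: field_simps)
qed

lemma pgd_rate_lt_one: "0 < lam \<Longrightarrow> 0 < \<eta> \<Longrightarrow> pgd_rate lam \<eta> < 1"
  unfolding pgd_rate_def by (simp add: add_pos_pos)

lemma pgd_rate_nonneg_iff:
  assumes "0 < lam" "0 < \<eta>"
  shows "0 \<le> pgd_rate lam \<eta> \<longleftrightarrow> \<eta> * lam \<le> 1"
proof -
  have "0 < \<eta> * lam"
    using assms by simp
  then show ?thesis
    using assms by (auto simp: pgd_rate_eq zero_le_divide_iff)
qed

locale smooth_strongly_convex_family =
  fixes X :: "'a::euclidean_space set" and \<Theta> :: "'b set" and f :: "'a \<Rightarrow> 'b \<Rightarrow> real"
    and L lam :: real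
  assumes X_closed: "closed X" and X_convex: "convex X" and X_ne: "X \<noteq> {}"
    and continuous: "\<And>\<phi>. \<phi> \<in> \<Theta> \<Longrightarrow> continuous_on X (\<lambda>y. f y \<phi>)"
    and L_pos: "L > 0" and lam_pos: "lam > 0"
    and smooth: "\<And>x y \<phi>. x \<in> X \<Longrightarrow> y \<in> X \<Longrightarrow> \<phi> \<in> \<Theta> \<Longrightarrow>
          f y \<phi> \<le> f x \<phi> + inner (grad_x f x \<phi>) (y - x) + L / 2 * (norm (y - x))\<^sup>2"
    and strongly_convex: "\<And>x y \<phi>. x \<in> X \<Longrightarrow> y \<in> X \<Longrightarrow> \<phi> \<in> \<Theta> \<Longrightarrow>
          f y \<phi> \<ge> f x \<phi> + inner (grad_x f x \<phi>) (y - x) + lam / 2 * (norm (y - x))\<^sup>2"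
begin

lemma minimum_exists: "\<phi> \<in> \<Theta> \<Longrightarrow> \<exists>w\<in>X. \<forall>y\<in>X. f w \<phi> \<le> f y \<phi>"
proof -
  assume "\<phi> \<in> \<Theta>"
  obtain x0 where "x0 \<in> X"
    using X_ne by blast
  then show ?thesis
    using continuous_attains_inf_quadratic_growth[OF X_closed _ continuous lam_pos]
      strongly_convex \<open>\<phi> \<in> \<Theta>\<close> by blast
qed

lemmas xstar_in = xstar_minimizes(1)[of X f, OF minimum_exists]
  and xstar_le = xstar_minimizes(2)[of X f, OF minimum_exists]

lemma lam_le_L:
  assumes "x \<in> X" "y \<in> X" "x \<noteq> y" "\<phi> \<in> \<Theta>"
  shows "lam \<le> L"
proof -
  have "lam / 2 * (norm (y - x))\<^sup>2 \<le> L / 2 * (norm (y - x))\<^sup>2"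
    using smooth[OF assms(1,2,4)] strongly_convex[OF assms(1,2,4)] by linarith
  then show ?thesis
    using assms(3) by simp
qed

lemma pgd_step_contraction_sq:
  assumes "\<phi> \<in> \<Theta>" "z \<in> X" "0 < \<eta>" "\<eta> * L \<le> 1"
  shows "(1 + \<eta> * lam) * (norm (pgd_step X f \<eta> \<phi> z - xstar X f \<phi>))\<^sup>2
    \<le> (1 - \<eta> * lam) * (norm (z - xstar X f \<phi>))\<^sup>2"
proof -
  let ?u = "pgd_step X f \<eta> \<phi> z" and ?w = "xstar X f \<phi>"
  have u: "?u \<in> X" and w: "?w \<in> X"
    using pgd_step_in[OF X_closed X_ne] xstar_in[OF assms(1)] .
  have "inner (grad_x f ?w \<phi>) (?u - ?w) \<ge> 0"
    by (rule minimizer_variational_inequality[where h = "\<lambda>y. f y \<phi>", OF X_convex w u L_pos xstar_le[OF assms(1)]])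
      (use smooth[OF w _ assms(1)] in auto)
  then have "f ?u \<phi> \<ge> f ?w \<phi> + lam / 2 * (norm (?u - ?w))\<^sup>2"
    using strongly_convex[OF w u assms(1)] by simp
  moreover have "inner (z - \<eta> *\<^sub>R grad_x f z \<phi> - ?u) (?w - ?u) \<le> 0"
    unfolding pgd_step_def by (rule closest_point_dot[OF X_convex X_closed w])
  ultimately show ?thesis
    by (rule projected_gradient_step_contraction_sq[OF smooth[OF assms(2) u assms(1)] _
          strongly_convex[OF assms(2) w assms(1)] _ assms(3,4)])
qed

lemma pgd_step_contraction:
  assumes "\<phi> \<in> \<Theta>" "z \<in> X" "0 < \<eta>" "\<eta> * L \<le> 1"
  shows "norm (pgd_step X f \<eta> \<phi> z - xstar X f \<phi>) \<le> pgd_rate lam \<eta> * norm (z - xstar X f \<phi>)"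
proof -
  have pos: "0 < 1 + \<eta> * lam"
    using lam_pos \<open>0 < \<eta>\<close> by (simp add: add_pos_pos)
  then have sq: "(norm (pgd_step X f \<eta> \<phi> z - xstar X f \<phi>))\<^sup>2
      \<le> (1 - \<eta> * lam) / (1 + \<eta> * lam) * (norm (z - xstar X f \<phi>))\<^sup>2"
    using pgd_step_contraction_sq[OF assms] by (simp add: field_simps)
  show ?thesis
  proof (cases "z = xstar X f \<phi>")
    case True
    then show ?thesis
      using sq by simp
  next
    case False
    have "\<eta> * lam \<le> 1"
      using lam_le_L[OF assms(2) xstar_in[OF assms(1)] False assms(1)] assms(3,4)
      by (meson mult_left_mono less_imp_le order_trans)
    then have "(norm (pgd_step X f \<eta> \<phi> z - xstar X f \<phi>))\<^sup>2
        \<le> (pgd_rate lam \<eta> * norm (z - xstar X f \<phi>))\<^sup>2"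
      using sq pos lam_pos \<open>0 < \<eta>\<close> by (simp add: pgd_rate_eq power_mult_distrib)
    then show ?thesis
      by (rule power2_le_imp_le)
        (use pgd_rate_nonneg_iff[OF lam_pos \<open>0 < \<eta>\<close>] \<open>\<eta> * lam \<le> 1\<close> in simp)
  qed
qed

lemma funpow_pgd_step_tracking:
  assumes "\<phi> \<in> \<Theta>" "z \<in> X" "0 < \<eta>" "\<eta> * L \<le> 1" "0 \<le> pgd_rate lam \<eta>"
    and grad_close: "\<And>y. y \<in> X \<Longrightarrow> norm (grad_x f y \<phi> - grad_x f y \<psi>) \<le> c"
  shows "norm ((pgd_step X f \<eta> \<psi> ^^ k) z - xstar X f \<phi>)
    \<le> pgd_rate lam \<eta> ^ k * norm (z - xstar X f \<phi>) + \<eta> * c * (\<Sum>i<k. pgd_rate lam \<eta> ^ i)"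
proof (rule funpow_perturbed_contraction[OF pgd_step_in[OF X_closed X_ne] assms(2,5)])
  fix y assume "y \<in> X"
  have "norm (pgd_step X f \<eta> \<psi> y - pgd_step X f \<eta> \<phi> y) \<le> \<eta> * c"
    using norm_pgd_step_param_diff_le[OF X_convex X_closed X_ne, of \<eta> f \<psi> y \<phi>] grad_close[OF \<open>y \<in> X\<close>]
      \<open>0 < \<eta>\<close> by (fastforce simp: norm_minus_commute intro: order_trans mult_left_mono)
  then show "norm (pgd_step X f \<eta> \<psi> y - xstar X f \<phi>) \<le> pgd_rate lam \<eta> * norm (y - xstar X f \<phi>) + \<eta> * c"
    using pgd_step_contraction[OF assms(1) \<open>y \<in> X\<close> assms(3,4)]
      norm_triangle_ineq[of "pgd_step X f \<eta> \<psi> y - pgd_step X f \<eta> \<phi> y" "pgd_step X f \<eta> \<phi> y - xstar X f \<phi>"]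
    by simp
qed

text \<open>
  Isabelle's \<open>sqrt\<close> is odd, so \<open>pgd_rate lam \<eta>\<close> is negative when \<open>\<eta> lam > 1\<close>; by
  \<open>lam_le_L\<close> this happens only if \<open>X\<close> is a single point.
\<close>

lemma singleton_if_pgd_rate_neg:
  assumes "pgd_rate lam \<eta> < 0" "0 < \<eta>" "\<eta> * L \<le> 1" "\<phi> \<in> \<Theta>" "y \<in> X" "z \<in> X"
  shows "y = z"
proof (rule ccontr)
  assume "y \<noteq> z"
  then have "lam \<le> L"
    using lam_le_L assms(4-6) by blast
  moreover have "1 < \<eta> * lam"
    using assms(1) pgd_rate_nonneg_iff[OF lam_pos \<open>0 < \<eta>\<close>] by simp
  ultimately show False
    using mult_left_mono[OF \<open>lam \<le> L\<close>, of \<eta>] assms(2,3) by linarith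
qed

end

locale predicted_pgd_run = smooth_strongly_convex_family X \<Theta> f L lam
  for X :: "'a::euclidean_space set" and \<Theta> :: "'b::real_normed_vector set" and f L lam +
  fixes \<eta> C\<^sub>\<theta> :: real and k T :: nat and \<theta> \<theta>h :: "nat \<Rightarrow> 'b" and x :: "nat \<Rightarrow> 'a"
  assumes grad_lipschitz: "\<And>y \<phi>1 \<phi>2. y \<in> X \<Longrightarrow> \<phi>1 \<in> \<Theta> \<Longrightarrow> \<phi>2 \<in> \<Theta> \<Longrightarrow>
          norm (grad_x f y \<phi>1 - grad_x f y \<phi>2) \<le> C\<^sub>\<theta> * norm (\<phi>1 - \<phi>2)"
    and C\<^sub>\<theta>_nonneg: "C\<^sub>\<theta> \<ge> 0"
    and T_pos: "T \<ge> 1"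
    and theta_in: "\<And>t. 1 \<le> t \<Longrightarrow> t \<le> T \<Longrightarrow> \<theta> t \<in> \<Theta>"
    and thetah_in: "\<And>t. 2 \<le> t \<Longrightarrow> t \<le> T \<Longrightarrow> \<theta>h t \<in> \<Theta>"
    and k_pos: "k \<ge> 1" and eta_pos: "\<eta> > 0" and eta_L: "\<eta> * L \<le> 1"
    and x1: "x 1 \<in> X"
    and x_upd: "\<And>t. 1 \<le> t \<Longrightarrow> t \<le> T - 1 \<Longrightarrow>
          x (t + 1) = (pgd_step X f \<eta> (\<theta>h (t + 1)) ^^ k) (x t)"
begin

abbreviation track_err :: "nat \<Rightarrow> real" where
  "track_err t \<equiv> norm (x t - xstar X f (\<theta> t))"

lemma x_in: "1 \<le> t \<Longrightarrow> t \<le> T \<Longrightarrow> x t \<in> X"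
proof (induction t rule: nat_induct_at_least)
  case (Suc t)
  then show ?case
    using x_upd[of t] funpow_pgd_step_in[OF X_closed X_ne] by simp
qed (use x1 in simp)

lemma track_err_step:
  assumes "0 \<le> pgd_rate lam \<eta>" "1 \<le> t" "t < T"
  shows "track_err (t + 1) \<le> pgd_rate lam \<eta> ^ k * (track_err t + norm (xstar X f (\<theta> t) - xstar X f (\<theta> (t + 1))))
    + \<eta> * C\<^sub>\<theta> * (\<Sum>i<k. pgd_rate lam \<eta> ^ i) * norm (\<theta> (t + 1) - \<theta>h (t + 1))"
proof -
  have \<theta>: "\<theta> (t + 1) \<in> \<Theta>" "\<theta>h (t + 1) \<in> \<Theta>" and "t \<le> T - 1" and "x t \<in> X"
    using assms(2,3) theta_in thetah_in x_in by auto
  have "track_err (t + 1) \<le> pgd_rate lam \<eta> ^ k * norm (x t - xstar X f (\<theta> (t + 1)))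
      + \<eta> * C\<^sub>\<theta> * (\<Sum>i<k. pgd_rate lam \<eta> ^ i) * norm (\<theta> (t + 1) - \<theta>h (t + 1))"
    unfolding x_upd[OF assms(2) \<open>t \<le> T - 1\<close>]
    using funpow_pgd_step_tracking[OF \<theta>(1) \<open>x t \<in> X\<close> eta_pos eta_L assms(1) grad_lipschitz[OF _ \<theta>]]
    by (simp add: ac_simps)
  also have "norm (x t - xstar X f (\<theta> (t + 1)))
      \<le> track_err t + norm (xstar X f (\<theta> t) - xstar X f (\<theta> (t + 1)))"
    by (rule norm_diff_triangle_le[OF order.refl order.refl])
  finally show ?thesis
    using assms(1) by (simp add: mult_left_mono)
qed

lemma track_err_sum_contractive:
  assumes "0 \<le> pgd_rate lam \<eta>"
  defines "C \<equiv> pgd_rate lam \<eta>"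
  shows "(\<Sum>t=1..T. track_err t) \<le> track_err 1 / (1 - C ^ k) + C ^ k / (1 - C ^ k) * path_length X f \<theta> T
    + \<eta> * C\<^sub>\<theta> / (1 - C) * pred_regularity \<theta> \<theta>h T"
proof -
  have "C < 1"
    unfolding C_def using pgd_rate_lt_one lam_pos eta_pos .
  then have "C ^ k < 1"
    using assms(1) k_pos unfolding C_def by (simp add: power_less_one_iff)
  define K where "K = \<eta> * C\<^sub>\<theta> * (\<Sum>i<k. C ^ i)"
  have "(1 - C ^ k) * (\<Sum>t=1..T. track_err t)
      \<le> track_err 1 + C ^ k * path_length X f \<theta> T + (\<Sum>t=2..T. K * norm (\<theta> t - \<theta>h t))"
    unfolding path_length_def
    by (rule sum_le_of_perturbed_recursion[where q = "\<lambda>t. K * norm (\<theta> t - \<theta>h t)"])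
      (use T_pos assms(1) track_err_step in \<open>auto simp: C_def K_def\<close>)
  also have "(\<Sum>t=2..T. K * norm (\<theta> t - \<theta>h t))
      = (1 - C ^ k) * (\<eta> * C\<^sub>\<theta> / (1 - C) * pred_regularity \<theta> \<theta>h T)"
    unfolding K_def pred_regularity_def sum_distrib_left[symmetric]
    using \<open>C < 1\<close> by (simp add: sum_gp_strict)
  finally have "((\<Sum>t=1..T. track_err t) - \<eta> * C\<^sub>\<theta> / (1 - C) * pred_regularity \<theta> \<theta>h T) * (1 - C ^ k)
      \<le> track_err 1 + C ^ k * path_length X f \<theta> T"
    by (simp add: algebra_simps)
  then show ?thesis
    using \<open>C ^ k < 1\<close> by (simp add: pos_le_divide_eq[symmetric] add_divide_distrib)
qed

lemma track_err_sum_degenerate: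
  assumes "pgd_rate lam \<eta> < 0"
  defines "C \<equiv> pgd_rate lam \<eta>"
  shows "(\<Sum>t=1..T. track_err t) \<le> track_err 1 / (1 - C ^ k) + C ^ k / (1 - C ^ k) * path_length X f \<theta> T
    + \<eta> * C\<^sub>\<theta> / (1 - C) * pred_regularity \<theta> \<theta>h T"
proof -
  have X_singleton: "y = z" if "y \<in> X" "z \<in> X" for y z
    using singleton_if_pgd_rate_neg[OF assms(1) eta_pos eta_L theta_in[OF order.refl T_pos] that] .
  have "track_err t = 0" if "1 \<le> t" "t \<le> T" for t
    using X_singleton[OF x_in[OF that] xstar_in[OF theta_in[OF that]]] by simp
  then have "(\<Sum>t=1..T. track_err t) = 0" and "track_err 1 = 0"
    using T_pos by auto
  moreover have "path_length X f \<theta> T = 0"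
    unfolding path_length_def
  proof (rule sum.neutral, rule ballI)
    fix t assume "t \<in> {1..T-1}"
    then have "\<theta> t \<in> \<Theta>" "\<theta> (t + 1) \<in> \<Theta>"
      using theta_in by auto
    then show "norm (xstar X f (\<theta> t) - xstar X f (\<theta> (t + 1))) = 0"
      using X_singleton xstar_in by simp
  qed
  moreover have "0 \<le> \<eta> * C\<^sub>\<theta> / (1 - C) * pred_regularity \<theta> \<theta>h T"
    using eta_pos C\<^sub>\<theta>_nonneg pgd_rate_lt_one[OF lam_pos eta_pos]
    unfolding C_def pred_regularity_def by (simp add: sum_nonneg)
  ultimately show ?thesis
    by simp
qed

lemma track_err_sum:
  defines "C \<equiv> pgd_rate lam \<eta>"
  shows "(\<Sum>t=1..T. track_err t) \<le> track_err 1 / (1 - C ^ k) + C ^ k / (1 - C ^ k) * path_length X f \<theta> T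
    + \<eta> * C\<^sub>\<theta> / (1 - C) * pred_regularity \<theta> \<theta>h T"
  unfolding C_def using track_err_sum_contractive track_err_sum_degenerate by fastforce

end

theorem corollary1:
  fixes X :: "'a::euclidean_space set" and \<Theta> :: "'b::euclidean_space set"
    and f :: "'a \<Rightarrow> 'b \<Rightarrow> real"
    and G L lam C\<^sub>\<theta> \<eta> :: real and k T :: nat
    and \<theta> \<theta>h :: "nat \<Rightarrow> 'b" and x :: "nat \<Rightarrow> 'a"
  assumes X_ne: "X \<noteq> {}" and X_closed: "closed X" and X_convex: "convex X"
    and f_diff: "\<And>\<phi> x. (\<lambda>y. f y \<phi>) differentiable (at x)"
    and f_convex: "\<And>\<phi>. convex_on UNIV (\<lambda>y. f y \<phi>)"
    and A1: "G > 0" "\<And>x y \<phi>. x \<in> X \<Longrightarrow> y \<in> X \<Longrightarrow> \<phi> \<in> \<Theta> \<Longrightarrow>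
              \<bar>f x \<phi> - f y \<phi>\<bar> \<le> G * norm (x - y)"
    and A2: "L > 0" "\<And>x y \<phi>. x \<in> X \<Longrightarrow> y \<in> X \<Longrightarrow> \<phi> \<in> \<Theta> \<Longrightarrow>
              f y \<phi> \<le> f x \<phi> + inner (grad_x f x \<phi>) (y - x) + L / 2 * (norm (y - x))\<^sup>2"
    and A3: "lam > 0" "\<And>x y \<phi>. x \<in> X \<Longrightarrow> y \<in> X \<Longrightarrow> \<phi> \<in> \<Theta> \<Longrightarrow>
              f y \<phi> \<ge> f x \<phi> + inner (grad_x f x \<phi>) (y - x) + lam / 2 * (norm (y - x))\<^sup>2"
    and A4: "C\<^sub>\<theta> > 0" "\<And>x \<phi>1 \<phi>2. x \<in> X \<Longrightarrow> \<phi>1 \<in> \<Theta> \<Longrightarrow> \<phi>2 \<in> \<Theta> \<Longrightarrow>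
              norm (grad_x f x \<phi>1 - grad_x f x \<phi>2) \<le> C\<^sub>\<theta> * norm (\<phi>1 - \<phi>2)"
    and T_pos: "T \<ge> 1"
    and theta_in: "\<And>t. 1 \<le> t \<Longrightarrow> t \<le> T \<Longrightarrow> \<theta> t \<in> \<Theta>"
    and thetah_in: "\<And>t. 2 \<le> t \<Longrightarrow> t \<le> T \<Longrightarrow> \<theta>h t \<in> \<Theta>"
    and k_pos: "k \<ge> 1" and eta_pos: "\<eta> > 0" and eta_le: "\<eta> \<le> 1 / L"
    and x1: "x 1 \<in> X"
    and x_upd: "\<And>t. 1 \<le> t \<Longrightarrow> t \<le> T - 1 \<Longrightarrow>
              x (t + 1) = (pgd_step X f \<eta> (\<theta>h (t + 1)) ^^ k) (x t)"
  shows "let C = sqrt (1 - 2 * lam * \<eta> / (1 + \<eta> * lam)) in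
         dyn_regret X f x \<theta> T
           \<le> G * norm (x 1 - xstar X f (\<theta> 1)) / (1 - C ^ k)
             + G * C ^ k / (1 - C ^ k) * path_length X f \<theta> T
             + G * \<eta> * C\<^sub>\<theta> / (1 - C) * pred_regularity \<theta> \<theta>h T"
proof -
  interpret predicted_pgd_run X \<Theta> f L lam \<eta> C\<^sub>\<theta> k T \<theta> \<theta>h x
  proof unfold_locales
    show "continuous_on X (\<lambda>y. f y \<phi>)" for \<phi>
      using f_diff differentiable_imp_continuous_within continuous_at_imp_continuous_on by blast
    show "\<eta> * L \<le> 1"
      using eta_le A2(1) by (simp add: field_simps)
  qed (use assms in auto)
  have "dyn_regret X f x \<theta> T \<le> G * (\<Sum>t=1..T. track_err t)"
    by (rule dyn_regret_le_sum_dist) (use x_in xstar_in xstar_le theta_in A1(2) in auto)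
  also have "\<dots> \<le> G * (track_err 1 / (1 - pgd_rate lam \<eta> ^ k)
      + pgd_rate lam \<eta> ^ k / (1 - pgd_rate lam \<eta> ^ k) * path_length X f \<theta> T
      + \<eta> * C\<^sub>\<theta> / (1 - pgd_rate lam \<eta>) * pred_regularity \<theta> \<theta>h T)"
    using track_err_sum A1(1) by (simp add: mult_left_mono)
  finally show ?thesis
    unfolding Let_def pgd_rate_def by (simp add: algebra_simps)
qed

end
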